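(* Let $L\ge 2$ and $N$ be integers with $2\le N\le L$, let $U>\frac{8}{L}$, and let $\phi\in\mathbb{R}$ with $0\le\phi<\frac{2\pi}{L}$. Consider the Lieb–Wu equations with one down-spin, i.e. the system \[ e^{\sqrt{-1}\,k_iL}=\frac{\lambda-\sin(k_i+\phi)-\sqrt{-1}\,U/4}{\lambda-\sin(k_i+\phi)+\sqrt{-1}\,U/4}\quad(i=1,\dots,N),\qquad \prod_{i=1}^{N}\frac{\lambda-\sin(k_i+\phi)-\sqrt{-1}\,U/4}{\lambda-\sin(k_i+\phi)+\sqrt{-1}\,U/4}=1, \] in the unknowns $k_1,\dots,k_N,\lambda$. Then these equations have $\binom{L}{N}(N-1)$ real solutions.
   Context: A real solution is a solution in which $\lambda\in\mathbb{R}$ and all $k_1,\dots,k_N$ are real numbers taken modulo $2\pi$ (in $[0,2\pi)$) that are pairwise distinct; solutions are counted as unordered sets $\{k_1,\dots,k_N\}$ together with $\lambda$. *)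

theory Defs
  imports Complex_Main
begin

definition lw_factor :: "real \<Rightarrow> real \<Rightarrow> real \<Rightarrow> real \<Rightarrow> complex" where
  "lw_factor U phi lam k =
     (complex_of_real (lam - sin (k + phi)) - \<i> * complex_of_real (U / 4)) /
     (complex_of_real (lam - sin (k + phi)) + \<i> * complex_of_real (U / 4))"

text \<open>Real solutions of the Lieb-Wu equations with one down-spin: an unordered set K of
  N pairwise distinct quasi-momenta in [0, 2 pi) together with a real rapidity lam.\<close>
definition lw_real_solutions :: "nat \<Rightarrow> nat \<Rightarrow> real \<Rightarrow> real \<Rightarrow> (real set \<times> real) set" where
  "lw_real_solutions L N U phi =
     {(K, lam). finite K \<and> card K = N \<and> K \<subseteq> {0..<2 * pi} \<and>
        (\<forall>k\<in>K. exp (\<i> * complex_of_real (k * real L)) = lw_factor U phi lam k) \<and>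
        (\<Prod>k\<in>K. lw_factor U phi lam k) = 1}"

end

theory Submission
  imports Defs "HOL-Analysis.Complex_Transcendental"
begin

(* For real k and lam, the equation for k says exactly that sin (k L / 2) is nonzero and
   lam = sin (k + phi) - (U/4) cot (k L / 2).  On each of the L cells
   (2 pi j / L, 2 pi (j + 1) / L) of [0, 2 pi) the right-hand side is a strictly increasing
   bijection onto the reals, because U L > 8 makes the cotangent term dominate the slope of
   the sine.  So every lam determines exactly one momentum k_j(lam) per cell, and a solution is
   a choice of N cells S together with a lam for which L * (sum of k_j(lam) over S) lies in
   2 pi Z, which is what the product equation says.  That sum is an increasing bijection from
   the reals onto the open interval between 2 pi s / L and 2 pi (s + N) / L, where s is the sum
   of the cell indices, and this interval contains exactly N - 1 admissible values. *)

lemma exp_ii_eq_cayley_iff: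
  fixes u a t :: real
  assumes "u > 0"
  shows "exp (\<i> * of_real t) = (of_real a - \<i> * of_real u) / (of_real a + \<i> * of_real u)
     \<longleftrightarrow> sin (t/2) \<noteq> 0 \<and> a = - u * cot (t/2)"
proof -
  define h where "h = t/2"
  \<comment> \<open>after clearing the denominator the two sides are \<open>e^{ih} z\<close> and \<open>e^{ih} (cnj z)\<close>, so the equation says that \<open>z\<close> is real\<close>
  define z where "z = exp (\<i> * of_real h) * (of_real a + \<i> * of_real u)"
  have nz: "of_real a + \<i> * of_real u \<noteq> (0::complex)"
    using assms by (auto simp: complex_eq_iff)
  have split: "exp (\<i> * of_real t) = exp (\<i> * of_real h) * exp (\<i> * of_real h)"
    by (simp add: h_def flip: exp_add)
  have conj: "of_real a - \<i> * of_real u = exp (\<i> * of_real h) * cnj z"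
    by (simp add: z_def exp_of_real exp_cnj flip: exp_add)
  have "exp (\<i> * of_real t) = (of_real a - \<i> * of_real u) / (of_real a + \<i> * of_real u)
      \<longleftrightarrow> exp (\<i> * of_real h) * z = exp (\<i> * of_real h) * cnj z"
    using nz by (simp only: eq_divide_eq split conj z_def mult.assoc not_False_eq_True if_True)
  also have "\<dots> \<longleftrightarrow> z = cnj z"
    by simp
  also have "\<dots> \<longleftrightarrow> a * sin h + u * cos h = 0"
    by (simp add: complex_eq_iff z_def Re_exp Im_exp algebra_simps) linarith
  also have "\<dots> \<longleftrightarrow> sin h \<noteq> 0 \<and> a = - u * cot h"
  proof
    assume E: "a * sin h + u * cos h = 0"
    have "sin h \<noteq> 0"
      using E assms sin_cos_squared_add[of h] by (auto simp: power2_eq_square)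
    with E show "sin h \<noteq> 0 \<and> a = - u * cot h" by (simp add: cot_def field_simps)
  qed (auto simp: cot_def field_simps)
  finally show ?thesis by (simp add: h_def)
qed

lemma prod_exp_ii_eq_1_iff:
  fixes c :: real
  assumes "finite K"
  shows "(\<Prod>k\<in>K. exp (\<i> * of_real (k * c))) = 1 \<longleftrightarrow> (\<exists>n::int. c * (\<Sum>K) = 2 * pi * of_int n)"
proof -
  have "(\<Prod>k\<in>K. exp (\<i> * of_real (k * c))) = exp (\<i> * of_real (c * (\<Sum>K)))"
    using assms by (simp add: exp_sum[symmetric] sum_distrib_left sum_distrib_right mult.commute)
  then show ?thesis
    by (auto simp: exp_eq_1 mult.commute mult.left_commute)
qed

lemma cot_add_npi: "cot (x + real n * pi) = cot (x :: real)"
  by (simp add: cot_def sin_add cos_add)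

locale increasing_onto =
  fixes f :: "real \<Rightarrow> real" and a b :: real
  assumes strict_mono: "strict_mono_on {a<..<b} f"
    and continuous: "continuous_on {a<..<b} f"
    and onto: "f ` {a<..<b} = UNIV"
begin

definition inv_f :: "real \<Rightarrow> real" where
  "inv_f = the_inv_into {a<..<b} f"

lemma inj_on_f: "inj_on f {a<..<b}"
  using strict_mono by (rule strict_mono_on_imp_inj_on)

lemma inv_f_in: "inv_f y \<in> {a<..<b}"
  unfolding inv_f_def using inj_on_f onto by (intro the_inv_into_into) auto

lemma f_inv_f [simp]: "f (inv_f y) = y"
  unfolding inv_f_def using inj_on_f onto by (intro f_the_inv_into_f) auto

lemma inv_f_eqI: "x \<in> {a<..<b} \<Longrightarrow> f x = y \<Longrightarrow> inv_f y = x"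
  unfolding inv_f_def using inj_on_f by (rule the_inv_into_f_eq)

lemma strict_mono_inv_f: "strict_mono inv_f"
  by (rule strict_monoI) (simp add: strict_mono_on_less[OF strict_mono inv_f_in inv_f_in, symmetric])

lemma isCont_inv_f: "isCont inv_f y"
proof -
  define c d where "c = (a + inv_f y) / 2" and "d = (inv_f y + b) / 2"
  have cd: "a < c" "c < inv_f y" "inv_f y < d" "d < b"
    using inv_f_in[of y] by (auto simp: c_def d_def)
  then have sub: "{c..d} \<subseteq> {a<..<b}" by auto
  have "isCont inv_f (f (inv_f y))"
  proof (rule isCont_inverse_function2[OF cd(2,3)])
    fix z assume "c \<le> z" "z \<le> d"
    then have z: "z \<in> {a<..<b}" using sub by auto
    show "inv_f (f z) = z" using inv_f_eqI[OF z refl] .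
    show "isCont f z" using continuous z by (simp add: continuous_on_eq_continuous_at)
  qed
  then show ?thesis by simp
qed

lemma inv_f_tendsto_at_bot: "(inv_f \<longlongrightarrow> a) at_bot"
proof (rule order_tendstoI)
  fix e assume "e < a"
  then show "\<forall>\<^sub>F y in at_bot. e < inv_f y"
    using inv_f_in by (auto intro: always_eventually less_trans)
next
  fix e assume "a < e"
  define p where "p = (a + min e b) / 2"
  have p: "p \<in> {a<..<b}" "p < e"
    using \<open>a < e\<close> inv_f_in[of 0] by (auto simp: p_def)
  have "inv_f y < e" if "y < f p" for y
    using that p strict_mono_on_less[OF strict_mono inv_f_in p(1)] by simp
  then show "\<forall>\<^sub>F y in at_bot. inv_f y < e"
    by (auto simp: eventually_at_bot_dense)
qed

lemma inv_f_tendsto_at_top: "(inv_f \<longlongrightarrow> b) at_top"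
proof (rule order_tendstoI)
  fix e assume "e > b"
  then show "\<forall>\<^sub>F y in at_top. inv_f y < e"
    using inv_f_in by (auto intro: always_eventually less_trans)
next
  fix e assume "e < b"
  define p where "p = (max e a + b) / 2"
  have p: "p \<in> {a<..<b}" "e < p"
    using \<open>e < b\<close> inv_f_in[of 0] by (auto simp: p_def)
  have "e < inv_f y" if "f p < y" for y
    using that p strict_mono_on_less[OF strict_mono p(1) inv_f_in] by simp
  then show "\<forall>\<^sub>F y in at_top. e < inv_f y"
    by (auto simp: eventually_at_top_dense)
qed

end

lemma IVT_at_bot_at_top:
  fixes f :: "real \<Rightarrow> real"
  assumes "\<And>y. isCont f y" "(f \<longlongrightarrow> A) at_bot" "(f \<longlongrightarrow> B) at_top" "A < c" "c < B"
  shows "\<exists>y. f y = c"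
proof -
  obtain y1 where y1: "f y1 < c"
    using order_tendstoD(2)[OF assms(2,4)] by (auto simp: eventually_at_bot_linorder)
  obtain y2 where y2: "c < f y2" "y1 \<le> y2"
    using eventually_conj[OF order_tendstoD(1)[OF assms(3,5)] eventually_ge_at_top[of y1]]
    by (auto simp: eventually_at_top_linorder)
  show ?thesis
    using IVT[of f y1 c y2] y1 y2 assms(1) by force
qed

locale lieb_wu =
  fixes L :: nat and U phi :: real
  assumes L_pos: "0 < L" and UL_gt_8: "8 < U * real L"
begin

lemma U_pos: "0 < U"
  using UL_gt_8 by (smt (verit) of_nat_0_le_iff mult_nonpos_nonneg)

definition lam :: "real \<Rightarrow> real" where
  "lam k = sin (k + phi) - U / 4 * cot (k * real L / 2)"

lemma lw_factor_eq_iff: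
  "exp (\<i> * of_real (k * real L)) = lw_factor U phi y k \<longleftrightarrow> sin (k * real L / 2) \<noteq> 0 \<and> lam k = y"
  unfolding lw_factor_def using U_pos
  by (subst exp_ii_eq_cayley_iff) (auto simp: lam_def algebra_simps)

lemma lw_real_solutions_iff:
  "(K, y) \<in> lw_real_solutions L N U phi \<longleftrightarrow>
     finite K \<and> card K = N \<and> K \<subseteq> {0..<2 * pi} \<and>
     (\<forall>k\<in>K. sin (k * real L / 2) \<noteq> 0 \<and> lam k = y) \<and>
     (\<exists>n::int. real L * (\<Sum>K) = 2 * pi * of_int n)"
proof -
  have "(\<Prod>k\<in>K. lw_factor U phi y k) = 1 \<longleftrightarrow> (\<exists>n::int. real L * (\<Sum>K) = 2 * pi * of_int n)"
    if "finite K" "\<forall>k\<in>K. sin (k * real L / 2) \<noteq> 0 \<and> lam k = y"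
  proof -
    have "(\<Prod>k\<in>K. lw_factor U phi y k) = (\<Prod>k\<in>K. exp (\<i> * of_real (k * real L)))"
      using that(2) lw_factor_eq_iff by (intro prod.cong refl) metis
    then show ?thesis
      using prod_exp_ii_eq_1_iff[OF that(1), of "real L"] by simp
  qed
  then show ?thesis
    unfolding lw_real_solutions_def using lw_factor_eq_iff by auto
qed

definition grid :: "nat \<Rightarrow> real" where
  "grid j = 2 * pi * real j / real L"

abbreviation cell :: "nat \<Rightarrow> real set" where
  "cell j \<equiv> {grid j<..<grid (Suc j)}"

lemma mem_cell_iff: "k \<in> cell j \<longleftrightarrow> real j * pi < k * real L / 2 \<and> k * real L / 2 < real j * pi + pi"
  using L_pos by (auto simp: grid_def field_simps)

lemma sin_nonzero_on_cell:
  assumes "k \<in> cell j"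
  shows "sin (k * real L / 2) \<noteq> 0"
proof -
  define x where "x = k * real L / 2 - real j * pi"
  have "0 < x" "x < pi" using assms[unfolded mem_cell_iff] by (auto simp: x_def)
  then have "sin x \<noteq> 0" using sin_gt_zero by force
  moreover have "sin (k * real L / 2) = (-1) ^ j * sin x"
    using sin_add[of x "real j * pi"] by (simp add: x_def)
  ultimately show ?thesis by simp
qed

lemma cell_disjoint:
  assumes "k \<in> cell i" "k \<in> cell j"
  shows "i = j"
proof -
  have "real i * pi < (real j + 1) * pi" "real j * pi < (real i + 1) * pi"
    using assms[unfolded mem_cell_iff] by (simp_all add: algebra_simps)
  then have "real i < real j + 1" "real j < real i + 1"
    by (simp_all only: mult_less_cancel_right pi_gt_zero) simp_all
  then show ?thesis by linarith
qed

lemma cell_subset: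
  assumes "j < L"
  shows "cell j \<subseteq> {0..<2 * pi}"
proof -
  have "2 * pi * real (Suc j) \<le> 2 * pi * real L"
    using assms by (intro mult_left_mono) auto
  then have "0 \<le> grid j" "grid (Suc j) \<le> 2 * pi"
    using L_pos by (auto simp: grid_def divide_le_eq)
  then show ?thesis by auto
qed

lemma in_cell_if_sin_nonzero:
  assumes "k \<in> {0..<2 * pi}" "sin (k * real L / 2) \<noteq> 0"
  obtains j where "j < L" "k \<in> cell j"
proof
  define t where "t = k * real L / (2 * pi)"
  have t: "0 \<le> t" "t < real L"
    using assms(1) L_pos by (auto simp: t_def field_simps)
  show "nat \<lfloor>t\<rfloor> < L"
    using t by linarith
  have "real (nat \<lfloor>t\<rfloor>) * pi \<noteq> k * real L / 2"
    using assms(2) by (metis sin_npi)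
  moreover have "real (nat \<lfloor>t\<rfloor>) \<le> t" "t < real (nat \<lfloor>t\<rfloor>) + 1"
    using t by linarith+
  ultimately show "k \<in> cell (nat \<lfloor>t\<rfloor>)"
    unfolding mem_cell_iff t_def by (auto simp: field_simps)
qed

lemma DERIV_lam:
  assumes "sin (k * real L / 2) \<noteq> 0"
  shows "DERIV lam k :> cos (k + phi) + U * real L / (8 * (sin (k * real L / 2))\<^sup>2)"
proof -
  have "DERIV (\<lambda>k. cot (k * real L / 2)) k :> - inverse ((sin (k * real L / 2))\<^sup>2) * (real L / 2)"
    by (rule DERIV_chain2[where g = "\<lambda>k. k * real L / 2", OF DERIV_cot[OF assms]])
      (auto intro!: derivative_eq_intros)
  then have "DERIV lam k :> cos (k + phi) * 1 - U / 4 * (- inverse ((sin (k * real L / 2))\<^sup>2) * (real L / 2))"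
    unfolding lam_def[abs_def] by (auto intro!: derivative_eq_intros)
  then show ?thesis by (simp add: field_simps)
qed

text \<open>The hypothesis \<open>U L > 8\<close> is used only here: it beats the slope \<open>-1\<close> of the sine term.\<close>
lemma DERIV_lam_pos:
  assumes "sin (k * real L / 2) \<noteq> 0"
  shows "0 < cos (k + phi) + U * real L / (8 * (sin (k * real L / 2))\<^sup>2)"
proof -
  have s: "0 < (sin (k * real L / 2))\<^sup>2" "(sin (k * real L / 2))\<^sup>2 \<le> 1"
    using assms by (simp_all add: abs_square_le_1)
  have "1 < U * real L / 8"
    using UL_gt_8 by simp
  also have "\<dots> \<le> U * real L / (8 * (sin (k * real L / 2))\<^sup>2)"
    using s U_pos L_pos by (simp add: le_divide_eq mult_left_le)
  finally show ?thesis
    using cos_ge_minus_one[of "k + phi"] by linarith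
qed

lemma strict_mono_on_lam: "strict_mono_on (cell j) lam"
proof (rule strict_mono_onI)
  fix k1 k2 assume "k1 \<in> cell j" "k2 \<in> cell j" "k1 < k2"
  then have "x \<in> cell j" if "k1 \<le> x" "x \<le> k2" for x
    using that by auto
  then show "lam k1 < lam k2"
    using DERIV_lam DERIV_lam_pos sin_nonzero_on_cell \<open>k1 < k2\<close>
    by (metis DERIV_pos_imp_increasing)
qed

lemma isCont_lam: "k \<in> cell j \<Longrightarrow> isCont lam k"
  using DERIV_lam sin_nonzero_on_cell DERIV_isCont by blast

lemma lam_cell_onto: "lam ` cell j = UNIV"
proof (rule subset_antisym[OF subset_UNIV subsetI])
  fix y
  define M where "M = 4 * (\<bar>y\<bar> + 2) / U"
  define x where "x = arctan (1 / M)"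
  have "0 < M" using U_pos by (simp add: M_def)
  then have x: "0 < x" "x < pi / 2" "cot x = M"
    using arctan_ubound[of "1 / M"] by (simp_all add: x_def cot_altdef tan_arctan)
  \<comment> \<open>points of the cell where \<open>cot (k L / 2)\<close> equals \<open>M\<close> and \<open>-M\<close>\<close>
  define a b where "a = 2 * (real j * pi + x) / real L" and "b = 2 * (real j * pi + pi - x) / real L"
  have aL: "a * real L / 2 = x + real j * pi" and bL: "b * real L / 2 = - x + real (Suc j) * pi"
    using L_pos by (simp_all add: a_def b_def field_simps)
  have "a * real L / 2 < b * real L / 2"
    unfolding aL bL using x by (simp add: algebra_simps)
  then have "a < b"
    using L_pos by (simp add: mult_less_cancel_right)
  have ab: "{a..b} \<subseteq> cell j"
  proof
    fix k assume "k \<in> {a..b}"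
    then have "a * real L / 2 \<le> k * real L / 2" "k * real L / 2 \<le> b * real L / 2"
      by (simp_all add: mult_right_mono)
    then show "k \<in> cell j"
      unfolding mem_cell_iff aL bL using x by (simp add: algebra_simps)
  qed
  have "U / 4 * M = \<bar>y\<bar> + 2"
    using U_pos by (simp add: M_def)
  then have "lam a = sin (a + phi) - (\<bar>y\<bar> + 2)" "lam b = sin (b + phi) + (\<bar>y\<bar> + 2)"
    unfolding lam_def aL bL cot_add_npi cot_minus x(3) by (simp_all only: mult_minus_right diff_minus_eq_add)
  then have "lam a \<le> y" "y \<le> lam b"
    using sin_le_one[of "a + phi"] sin_ge_minus_one[of "b + phi"] by linarith+
  then obtain k where "a \<le> k" "k \<le> b" "lam k = y"
    using IVT[of lam a y b] \<open>a < b\<close> ab isCont_lam by (meson atLeastAtMost_iff less_imp_le subsetD)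
  with ab show "y \<in> lam ` cell j" by auto
qed

lemma increasing_onto_lam: "increasing_onto lam (grid j) (grid (Suc j))"
  by unfold_locales
    (simp_all add: strict_mono_on_lam lam_cell_onto continuous_at_imp_continuous_on isCont_lam)

definition momentum :: "nat \<Rightarrow> real \<Rightarrow> real" where
  "momentum j = increasing_onto.inv_f lam (grid j) (grid (Suc j))"

lemmas momentum_in_cell = increasing_onto.inv_f_in[OF increasing_onto_lam, folded momentum_def]
lemmas lam_momentum = increasing_onto.f_inv_f[OF increasing_onto_lam, folded momentum_def]
lemmas momentum_eqI = increasing_onto.inv_f_eqI[OF increasing_onto_lam, folded momentum_def]
lemmas strict_mono_momentum = increasing_onto.strict_mono_inv_f[OF increasing_onto_lam, folded momentum_def]
lemmas isCont_momentum = increasing_onto.isCont_inv_f[OF increasing_onto_lam, folded momentum_def]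
lemmas momentum_tendsto_at_bot =
  increasing_onto.inv_f_tendsto_at_bot[OF increasing_onto_lam, folded momentum_def]
lemmas momentum_tendsto_at_top =
  increasing_onto.inv_f_tendsto_at_top[OF increasing_onto_lam, folded momentum_def]

lemma inj_on_momentum: "inj_on (\<lambda>j. momentum j y) S"
  by (rule inj_onI) (metis cell_disjoint momentum_in_cell)

definition momentum_sum :: "nat set \<Rightarrow> real \<Rightarrow> real" where
  "momentum_sum S y = (\<Sum>j\<in>S. momentum j y)"

lemma strict_mono_momentum_sum:
  "finite S \<Longrightarrow> S \<noteq> {} \<Longrightarrow> strict_mono (momentum_sum S)"
  unfolding momentum_sum_def
  by (intro strict_monoI sum_strict_mono) (auto intro: strict_monoD[OF strict_mono_momentum])

lemma sum_grid: "(\<Sum>j\<in>S. grid j) = 2 * pi * real (\<Sum>S) / real L"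
  unfolding grid_def by (simp add: sum_divide_distrib[symmetric] sum_distrib_left[symmetric])

lemma sum_grid_Suc: "(\<Sum>j\<in>S. grid (Suc j)) = 2 * pi * (real (\<Sum>S) + real (card S)) / real L"
  unfolding grid_def by (simp add: sum_divide_distrib[symmetric] sum_distrib_left[symmetric] sum.distrib)

lemma range_momentum_sum:
  assumes "finite S" "S \<noteq> {}"
  shows "range (momentum_sum S) = {(\<Sum>j\<in>S. grid j)<..<(\<Sum>j\<in>S. grid (Suc j))}"
proof (intro subset_antisym subsetI)
  fix c assume "c \<in> range (momentum_sum S)"
  then show "c \<in> {(\<Sum>j\<in>S. grid j)<..<(\<Sum>j\<in>S. grid (Suc j))}"
    using assms momentum_in_cell
    by (auto simp: momentum_sum_def intro!: sum_strict_mono)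
next
  fix c assume c: "c \<in> {(\<Sum>j\<in>S. grid j)<..<(\<Sum>j\<in>S. grid (Suc j))}"
  have "(momentum_sum S \<longlongrightarrow> (\<Sum>j\<in>S. grid j)) at_bot"
    unfolding momentum_sum_def[abs_def] by (intro tendsto_sum momentum_tendsto_at_bot)
  moreover have "(momentum_sum S \<longlongrightarrow> (\<Sum>j\<in>S. grid (Suc j))) at_top"
    unfolding momentum_sum_def[abs_def] by (intro tendsto_sum momentum_tendsto_at_top)
  moreover have "isCont (momentum_sum S) y" for y
    unfolding momentum_sum_def[abs_def] by (intro isCont_sum ballI isCont_momentum)
  ultimately obtain y where "momentum_sum S y = c"
    using IVT_at_bot_at_top c by (metis greaterThanLessThan_iff)
  then show "c \<in> range (momentum_sum S)" by blast
qed

definition admissible_rapidities :: "nat set \<Rightarrow> real set" where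
  "admissible_rapidities S = {y. \<exists>n::int. real L * momentum_sum S y = 2 * pi * of_int n}"

lemma momentum_sum_image_admissible_rapidities:
  assumes "finite S" "S \<noteq> {}"
  shows "momentum_sum S ` admissible_rapidities S =
    (\<lambda>n::int. 2 * pi * of_int n / real L) ` {int (\<Sum>S)<..<int (\<Sum>S) + int (card S)}"
    (is "_ = ?scale ` ?I")
proof -
  have scale_less_iff: "2 * pi * x / real L < 2 * pi * z / real L \<longleftrightarrow> x < z" for x z
    using L_pos by (simp add: divide_less_cancel)
  have "range (momentum_sum S) =
      {2 * pi * real (\<Sum>S) / real L<..<2 * pi * (real (\<Sum>S) + real (card S)) / real L}"
    using range_momentum_sum[OF assms] by (simp only: sum_grid sum_grid_Suc)
  then have in_range_iff: "?scale n \<in> range (momentum_sum S) \<longleftrightarrow> n \<in> ?I" for n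
    by (simp add: scale_less_iff del: of_nat_sum) linarith
  have admissible_iff: "real L * momentum_sum S y = 2 * pi * of_int n \<longleftrightarrow> momentum_sum S y = ?scale n"
    for y n
    using L_pos by (auto simp: field_simps)
  show ?thesis
  proof (intro set_eqI iffI)
    fix c assume "c \<in> momentum_sum S ` admissible_rapidities S"
    then obtain y n where "c = momentum_sum S y" "momentum_sum S y = ?scale n"
      by (auto simp: admissible_rapidities_def admissible_iff)
    moreover have "n \<in> ?I"
      using in_range_iff[of n] \<open>momentum_sum S y = ?scale n\<close> by (metis rangeI)
    ultimately show "c \<in> ?scale ` ?I"
      by (metis image_eqI)
  next
    fix c assume "c \<in> ?scale ` ?I"
    then obtain n where n: "n \<in> ?I" "c = ?scale n"
      by blast
    then obtain y where "momentum_sum S y = ?scale n"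
      using in_range_iff[of n] by auto
    then have "y \<in> admissible_rapidities S" "c = momentum_sum S y"
      using n(2) by (auto simp: admissible_rapidities_def admissible_iff)
    then show "c \<in> momentum_sum S ` admissible_rapidities S"
      by blast
  qed
qed

lemma finite_card_admissible_rapidities:
  assumes "finite S" "S \<noteq> {}"
  shows "finite (admissible_rapidities S) \<and> card (admissible_rapidities S) = card S - 1"
proof -
  let ?scale = "\<lambda>n::int. 2 * pi * of_int n / real L"
  let ?I = "{int (\<Sum>S)<..<int (\<Sum>S) + int (card S)}"
  have inj_sum: "inj_on (momentum_sum S) (admissible_rapidities S)"
    by (rule strict_mono_imp_inj_on[OF strict_mono_momentum_sum[OF assms]])
  have inj_scale: "inj_on ?scale ?I"
    by (rule inj_onI) (use L_pos in simp)
  have "finite ?I" "card ?I = card S - 1"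
    by auto
  then show ?thesis
    using momentum_sum_image_admissible_rapidities[OF assms]
      card_image[OF inj_sum] card_image[OF inj_scale] finite_imageD[OF _ inj_sum]
    by (metis finite_imageI)
qed

lemma sum_momenta: "(\<Sum>k\<in>(\<lambda>j. momentum j y) ` S. k) = momentum_sum S y"
  unfolding momentum_sum_def by (simp add: sum.reindex inj_on_momentum)

lemma momenta_in_lw_real_solutions:
  assumes S: "S \<subseteq> {..<L}" "card S = N" and y: "y \<in> admissible_rapidities S"
  shows "((\<lambda>j. momentum j y) ` S, y) \<in> lw_real_solutions L N U phi"
proof -
  have "finite ((\<lambda>j. momentum j y) ` S)"
    using S(1) finite_nat_iff_bounded by blast
  moreover have "card ((\<lambda>j. momentum j y) ` S) = N"
    using S(2) card_image[OF inj_on_momentum] by simp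
  moreover have "(\<lambda>j. momentum j y) ` S \<subseteq> {0..<2 * pi}"
  proof (rule image_subsetI)
    fix j assume "j \<in> S"
    then show "momentum j y \<in> {0..<2 * pi}"
      using S(1) cell_subset[of j] momentum_in_cell[of j y] by (meson lessThan_iff subsetD)
  qed
  moreover have "\<forall>k\<in>(\<lambda>j. momentum j y) ` S. sin (k * real L / 2) \<noteq> 0 \<and> lam k = y"
    using sin_nonzero_on_cell momentum_in_cell lam_momentum by blast
  moreover have "\<exists>n::int. real L * (\<Sum>((\<lambda>j. momentum j y) ` S)) = 2 * pi * of_int n"
    using y by (simp add: sum_momenta admissible_rapidities_def)
  ultimately show ?thesis
    unfolding lw_real_solutions_iff by blast
qed

lemma lw_real_solutionE:
  assumes "(K, y) \<in> lw_real_solutions L N U phi"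
  obtains S where "S \<subseteq> {..<L}" "card S = N" "y \<in> admissible_rapidities S"
    "K = (\<lambda>j. momentum j y) ` S"
proof
  have K: "card K = N" "K \<subseteq> {0..<2 * pi}" "\<forall>k\<in>K. sin (k * real L / 2) \<noteq> 0 \<and> lam k = y"
    "\<exists>n::int. real L * (\<Sum>K) = 2 * pi * of_int n"
    using assms unfolding lw_real_solutions_iff by blast+
  define S where "S = {j. j < L \<and> momentum j y \<in> K}"
  show KS: "K = (\<lambda>j. momentum j y) ` S"
  proof (intro subset_antisym subsetI)
    fix k assume "k \<in> K"
    then have "k \<in> {0..<2 * pi}" "sin (k * real L / 2) \<noteq> 0" "lam k = y"
      using K(2,3) by auto
    then obtain j where "j < L" "k \<in> cell j" "lam k = y"
      using in_cell_if_sin_nonzero by metis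
    then have "j \<in> S" "momentum j y = k"
      using momentum_eqI \<open>k \<in> K\<close> by (auto simp: S_def)
    then show "k \<in> (\<lambda>j. momentum j y) ` S"
      by (metis image_eqI)
  qed (auto simp: S_def)
  show "S \<subseteq> {..<L}"
    by (auto simp: S_def)
  show "card S = N"
    using K(1) card_image[OF inj_on_momentum] by (simp add: KS)
  show "y \<in> admissible_rapidities S"
    using K(4) by (simp add: KS sum_momenta admissible_rapidities_def)
qed

lemma lw_real_solutions_eq:
  "lw_real_solutions L N U phi =
     (\<lambda>(S, y). ((\<lambda>j. momentum j y) ` S, y)) `
       (SIGMA S:{S. S \<subseteq> {..<L} \<and> card S = N}. admissible_rapidities S)"
  by (auto simp: momenta_in_lw_real_solutions elim!: lw_real_solutionE)

lemma inj_on_momenta_with_rapidity: "inj_on (\<lambda>(S, y). ((\<lambda>j. momentum j y) ` S, y)) A"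
  by (rule inj_onI) (auto simp: inj_image_eq_iff[OF inj_on_momentum])

lemma card_lw_real_solutions:
  assumes "1 \<le> N"
  shows "finite (lw_real_solutions L N U phi) \<and>
    card (lw_real_solutions L N U phi) = (L choose N) * (N - 1)"
proof -
  define Subsets where "Subsets = {S. S \<subseteq> {..<L} \<and> card S = N}"
  have "finite S" "S \<noteq> {}" if "S \<in> Subsets" for S
    using that assms finite_subset by (auto simp: Subsets_def)
  then have adm: "finite (admissible_rapidities S) \<and> card (admissible_rapidities S) = N - 1"
    if "S \<in> Subsets" for S
    using finite_card_admissible_rapidities that by (auto simp: Subsets_def)
  have "finite Subsets" "card Subsets = L choose N"
    using n_subsets[of "{..<L}" N] by (simp_all add: Subsets_def)
  then have "finite (SIGMA S:Subsets. admissible_rapidities S)"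
    "card (SIGMA S:Subsets. admissible_rapidities S) = (L choose N) * (N - 1)"
    using adm by (simp_all add: card_SigmaI)
  then show ?thesis
    unfolding lw_real_solutions_eq Subsets_def[symmetric]
    by (simp add: card_image inj_on_momenta_with_rapidity)
qed

end

theorem proposition1:
  fixes L N :: nat and U phi :: real
  assumes "L \<ge> 2" and "2 \<le> N" and "N \<le> L"
    and "U > 8 / real L"
    and "0 \<le> phi" and "phi < 2 * pi / real L"
  shows "finite (lw_real_solutions L N U phi) \<and>
         card (lw_real_solutions L N U phi) = (L choose N) * (N - 1)"
proof -
  interpret lieb_wu L U phi
    using assms(1,4) by unfold_locales (auto simp: divide_less_eq)
  show ?thesis
    using assms(2) by (intro card_lw_real_solutions) simp
qed

end
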